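(* Assume Assumption (A1) below holds for the chosen bridge extension. Then: (i) For all $0\le s<t\le 1$, every $\ell\in\{1,\dots,L\}$ and every $\mathbf x_t\in\mathsf X$ with $p_t(\mathbf x_t)>0$, $$p^\ell_{s|t}(\cdot\mid \mathbf x_t)=q^\ell_{s|0,t}\big(\cdot\mid \hat{\mathbf x}^{\mathrm{loo}}_0(\mathbf x_t,t)^\ell,\ \mathbf x_t^\ell\big).$$ (ii) Consequently, for every time grid, the predictor $d^\star(\mathbf x,t):=\hat{\mathbf x}^{\mathrm{loo}}_0(\mathbf x,t)$ minimizes $J$: $J(d^\star)\le J(d)$ for every predictor $d$. (iii) (Uniqueness for UDM.) Consider the uniform case $\pi^\ell=\mathbf 1/K$ with the canonical extension given below. Assume $\alpha$ is strictly decreasing with $\alpha_0=1$ and $\alpha_t\in(0,1)$ for $t\in(0,1]$. Let $0<s<t\le 1$ and let $e_k\in\mathsf V$. Then the map $\nu\mapsto q^\ell_{s|0,t}(\cdot\mid\nu,e_k)$ is injective on $\Delta_K$. In particular, if $\nu\in\Delta_K$ satisfies $q^\ell_{s|0,t}(\cdot\mid \nu,\mathbf x_t^\ell)=p^\ell_{s|t}(\cdot\mid\mathbf x_t)$, then $\nu=\hat{\mathbf x}^{\mathrm{loo}}_0(\mathbf x_t,t)^\ell$. Hence the minimizer in (ii) is unique (at every $\mathbf x_t$ and for every term with $s_i>0$).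
   Context: **Setup.** - Let $K\ge2$, $L\ge1$ and $\mathsf V=\{1,\dots,K\}$. Tokens are identified with the standard basis vectors $e_1,\dots,e_K$ of $\mathbb R^K$. - $\Delta_K$ is the probability simplex in $\mathbb R^K$, and $\mathbf 1$ is the all-ones vector. For $\pi\in\Delta_K$ and a token $x$, $\mathrm{Cat}(x;\pi):=\langle x,\pi\rangle$. - $\mathsf X=\mathsf V^L$. For $\mathbf x\in\mathsf X$, $\mathbf x^\ell$ denotes its $\ell$-th token and $\mathbf x^{-\ell}\in\mathsf V^{L-1}$ denotes the remaining tokens. - $p_0$ is a probability distribution on $\mathsf X$. - The noise schedule $\alpha:[0,1]\to[0,1]$ is nonincreasing with $\alpha_0=1$, and $\alpha_{t|s}:=\alpha_t/\alpha_s$. - For each position $\ell$ fix $\pi^\ell\in\Delta_K$. The forward token kernels are $q^\ell_{t|s}(x_t\mid x_s)=\mathrm{Cat}(x_t;\alpha_{t|s}x_s+(1-\alpha_{t|s})\pi^\ell)$ for $0\le s<t\le1$, and $q_{t|s}(\mathbf x_t\mid\mathbf x_s)=\prod_\ell q^\ell_{t|s}(\mathbf x_t^\ell\mid\mathbf x_s^\ell)$. - The same formula $q^\ell_{t|0}(x\mid\nu)=\langle x,\alpha_t\nu+(1-\alpha_t)\pi^\ell\rangle$ is used for $\nu\in\Delta_K$. - $(X_t)_{t\in[0,1]}$ is the Markov process with $X_0\sim p_0$ and these transitions. $p_t$ is the law of $X_t$, and $p_t(\mathbf x^{-\ell})$ denotes the marginal of $X_t^{-\ell}$. - "UDM" means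 $\pi^\ell=\mathbf 1/K$ for all $\ell$. **Posteriors.** - Denoiser: $p^\ell_{0|t}(x\mid\mathbf x_t):=\mathbb P(X_0^\ell=x\mid X_t=\mathbf x_t)$. - Leave-one-out (LOO) posterior: $p^{\mathrm{loo},\ell}_{0|t}(x\mid\mathbf x_t^{-\ell}):=\mathbb P(X_0^\ell=x\mid X_t^{-\ell}=\mathbf x_t^{-\ell})$. Equivalently it is proportional to $\sum_{\mathbf x_0^{-\ell}}p_0(\mathbf x_0)\prod_{j\ne\ell}q^j_{t|0}(\mathbf x_t^j\mid\mathbf x_0^j)$ with $\mathbf x_0^\ell=x$. - Its mean vector is $\hat{\mathbf x}^{\mathrm{loo}}_0(\mathbf x_t,t)^\ell:=\sum_x p^{\mathrm{loo},\ell}_{0|t}(x\mid\mathbf x_t^{-\ell})\,x\in\Delta_K$. - Reverse token marginal: $p^\ell_{s|t}(x\mid\mathbf x_t):=\mathbb P(X^\ell_s=x\mid X_t=\mathbf x_t)$. **Bridge extension.** - For $0\le s<t$, a bridge extension is a map $(\nu,x_t)\mapsto q^\ell_{s|0,t}(\cdot\mid\nu,x_t)\in\Delta_K$ defined for $\nu\in\Delta_K$ and $x_t\in\mathsf V$. - For one-hot $\nu=x_0$ with $q^\ell_{t|0}(x_t\mid x_0)>0$ it equals $q^\ell_{t|s}(x_t\mid x_s)q^\ell_{s|0}(x_s\mid x_0)/q^\ell_{t|0}(x_t\mid x_0)$. - Assumption (A1): for all $x_s,x_t\in\mathsf V$ and all $\nu\in\Delta_K$ with $q^\ell_{t|0}(x_t\mid\nu)>0$,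 $$q^\ell_{s|0,t}(x_s\mid\nu,x_t)=\frac{q^\ell_{t|s}(x_t\mid x_s)\,q^\ell_{s|0}(x_s\mid\nu)}{q^\ell_{t|0}(x_t\mid\nu)}.$$ - In the UDM case the canonical extension is: for $x_t=e_k$, $$q^\ell_{s|0,t}(\cdot\mid\nu,e_k)=\mathrm{Cat}\Big(\cdot;\ \frac{K\alpha_t\nu_k e_k+(\alpha_{t|s}-\alpha_t)e_k+(\alpha_s-\alpha_t)\nu+D_{s,t}\mathbf 1/K}{K\alpha_t\nu_k+1-\alpha_t}\Big),$$ with $\nu_k=\langle e_k,\nu\rangle$ and $D_{s,t}=(1-\alpha_{t|s})(1-\alpha_s)$. This extension satisfies (A1). **Objective.** - Fix a grid $0=t_0<t_1<\dots<t_n=1$ and set $s_i=t_{i-1}$. - A predictor is a function $d:\mathsf X\times[0,1]\to\Delta_K^L$. - The objective is $$J(d):=\sum_{i=1}^n\sum_{\ell=1}^L\mathbb E\Big[\mathrm{KL}\Big(p^\ell_{s_i|t_i}(\cdot\mid X_{t_i})\ \Big\|\ q^\ell_{s_i|0,t_i}\big(\cdot\mid d(X_{t_i},t_i)^\ell,X^\ell_{t_i}\big)\Big)\Big].$$ *)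

theory Defs
  imports Complex_Main "HOL-Library.FuncSet" "HOL-Library.Extended_Real"
begin

(* Tokens are indices 0..K-1 (token k stands for the basis vector e_k).
   Vectors in R^K are functions nat => real, required to vanish outside {..<K}. *)

definition simplex :: "nat \<Rightarrow> (nat \<Rightarrow> real) \<Rightarrow> bool" where
  "simplex K \<nu> \<longleftrightarrow> (\<forall>j. K \<le> j \<longrightarrow> \<nu> j = 0) \<and> (\<forall>j<K. 0 \<le> \<nu> j) \<and> (\<Sum>j<K. \<nu> j) = 1"

definition seqs :: "nat \<Rightarrow> nat \<Rightarrow> (nat \<Rightarrow> nat) set" where
  "seqs K L = {..<L} \<rightarrow>\<^sub>E {..<K}"

definition is_dist :: "nat \<Rightarrow> nat \<Rightarrow> ((nat \<Rightarrow> nat) \<Rightarrow> real) \<Rightarrow> bool" where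
  "is_dist K L p0 \<longleftrightarrow> (\<forall>x\<in>seqs K L. 0 \<le> p0 x) \<and> (\<Sum>x\<in>seqs K L. p0 x) = 1"

definition schedule :: "(real \<Rightarrow> real) \<Rightarrow> bool" where
  "schedule \<alpha> \<longleftrightarrow> \<alpha> 0 = 1 \<and> (\<forall>t\<in>{0..1}. 0 \<le> \<alpha> t \<and> \<alpha> t \<le> 1)
     \<and> (\<forall>s t. 0 \<le> s \<longrightarrow> s \<le> t \<longrightarrow> t \<le> 1 \<longrightarrow> \<alpha> t \<le> \<alpha> s)"

(* forward token kernel q^l_{t|s}(y | x) for one-hot x *)
definition qfwd :: "(real \<Rightarrow> real) \<Rightarrow> (nat \<Rightarrow> nat \<Rightarrow> real) \<Rightarrow> nat \<Rightarrow> real \<Rightarrow> real \<Rightarrow> nat \<Rightarrow> nat \<Rightarrow> real" where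
  "qfwd \<alpha> \<pi> l s t y x = (\<alpha> t / \<alpha> s) * (if y = x then 1 else 0) + (1 - \<alpha> t / \<alpha> s) * \<pi> l y"

definition q0 :: "(real \<Rightarrow> real) \<Rightarrow> (nat \<Rightarrow> nat \<Rightarrow> real) \<Rightarrow> nat \<Rightarrow> real \<Rightarrow> nat \<Rightarrow> (nat \<Rightarrow> real) \<Rightarrow> real" where
  "q0 \<alpha> \<pi> l t y \<nu> = \<alpha> t * \<nu> y + (1 - \<alpha> t) * \<pi> l y"

definition qseq :: "nat \<Rightarrow> (real \<Rightarrow> real) \<Rightarrow> (nat \<Rightarrow> nat \<Rightarrow> real) \<Rightarrow> real \<Rightarrow> real \<Rightarrow> (nat \<Rightarrow> nat) \<Rightarrow> (nat \<Rightarrow> nat) \<Rightarrow> real" where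
  "qseq L \<alpha> \<pi> s t y x = (\<Prod>l<L. qfwd \<alpha> \<pi> l s t (y l) (x l))"

definition pt :: "nat \<Rightarrow> nat \<Rightarrow> ((nat \<Rightarrow> nat) \<Rightarrow> real) \<Rightarrow> (real \<Rightarrow> real) \<Rightarrow> (nat \<Rightarrow> nat \<Rightarrow> real) \<Rightarrow> real \<Rightarrow> (nat \<Rightarrow> nat) \<Rightarrow> real" where
  "pt K L p0 \<alpha> \<pi> t y = (\<Sum>x0\<in>seqs K L. p0 x0 * qseq L \<alpha> \<pi> 0 t y x0)"

definition joint2 :: "nat \<Rightarrow> nat \<Rightarrow> ((nat \<Rightarrow> nat) \<Rightarrow> real) \<Rightarrow> (real \<Rightarrow> real) \<Rightarrow> (nat \<Rightarrow> nat \<Rightarrow> real) \<Rightarrow> real \<Rightarrow> real \<Rightarrow> (nat \<Rightarrow> nat) \<Rightarrow> (nat \<Rightarrow> nat) \<Rightarrow> real" where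
  "joint2 K L p0 \<alpha> \<pi> s t xs xt =
     (\<Sum>x0\<in>seqs K L. p0 x0 * qseq L \<alpha> \<pi> 0 s xs x0 * qseq L \<alpha> \<pi> s t xt xs)"

(* reverse token marginal p^l_{s|t}(. | xt) = P(X_s^l = . | X_t = xt) *)
definition prev :: "nat \<Rightarrow> nat \<Rightarrow> ((nat \<Rightarrow> nat) \<Rightarrow> real) \<Rightarrow> (real \<Rightarrow> real) \<Rightarrow> (nat \<Rightarrow> nat \<Rightarrow> real) \<Rightarrow> nat \<Rightarrow> real \<Rightarrow> real \<Rightarrow> (nat \<Rightarrow> nat) \<Rightarrow> nat \<Rightarrow> real" where
  "prev K L p0 \<alpha> \<pi> l s t xt = (\<lambda>x.
     (\<Sum>xs\<in>{xs\<in>seqs K L. xs l = x}. joint2 K L p0 \<alpha> \<pi> s t xs xt) / pt K L p0 \<alpha> \<pi> t xt)"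

definition loo_w :: "nat \<Rightarrow> ((nat \<Rightarrow> nat) \<Rightarrow> real) \<Rightarrow> (real \<Rightarrow> real) \<Rightarrow> (nat \<Rightarrow> nat \<Rightarrow> real) \<Rightarrow> nat \<Rightarrow> real \<Rightarrow> (nat \<Rightarrow> nat) \<Rightarrow> (nat \<Rightarrow> nat) \<Rightarrow> real" where
  "loo_w L p0 \<alpha> \<pi> l t xt x0 = p0 x0 * (\<Prod>j\<in>{..<L} - {l}. qfwd \<alpha> \<pi> j 0 t (xt j) (x0 j))"

(* LOO posterior P(X_0^l = x | X_t^{-l} = xt^{-l}) *)
definition loo_post :: "nat \<Rightarrow> nat \<Rightarrow> ((nat \<Rightarrow> nat) \<Rightarrow> real) \<Rightarrow> (real \<Rightarrow> real) \<Rightarrow> (nat \<Rightarrow> nat \<Rightarrow> real) \<Rightarrow> nat \<Rightarrow> real \<Rightarrow> (nat \<Rightarrow> nat) \<Rightarrow> nat \<Rightarrow> real" where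
  "loo_post K L p0 \<alpha> \<pi> l t xt x =
     (\<Sum>x0\<in>{x0\<in>seqs K L. x0 l = x}. loo_w L p0 \<alpha> \<pi> l t xt x0) / (\<Sum>x0\<in>seqs K L. loo_w L p0 \<alpha> \<pi> l t xt x0)"

definition loo_mean :: "nat \<Rightarrow> nat \<Rightarrow> ((nat \<Rightarrow> nat) \<Rightarrow> real) \<Rightarrow> (real \<Rightarrow> real) \<Rightarrow> (nat \<Rightarrow> nat \<Rightarrow> real) \<Rightarrow> (nat \<Rightarrow> nat) \<Rightarrow> real \<Rightarrow> nat \<Rightarrow> nat \<Rightarrow> real" where
  "loo_mean K L p0 \<alpha> \<pi> xt t l = (\<lambda>k. if k < K then loo_post K L p0 \<alpha> \<pi> l t xt k else 0)"

(* A bridge extension: bridge l s t nu xt = q^l_{s|0,t}(. | nu, xt), with values in Delta_K *)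
definition bridge_ext :: "nat \<Rightarrow> nat \<Rightarrow> (nat \<Rightarrow> real \<Rightarrow> real \<Rightarrow> (nat \<Rightarrow> real) \<Rightarrow> nat \<Rightarrow> nat \<Rightarrow> real) \<Rightarrow> bool" where
  "bridge_ext K L br \<longleftrightarrow> (\<forall>l<L. \<forall>s t. 0 \<le> s \<longrightarrow> s < t \<longrightarrow> t \<le> 1 \<longrightarrow>
      (\<forall>\<nu> xt. simplex K \<nu> \<longrightarrow> xt < K \<longrightarrow> simplex K (br l s t \<nu> xt)))"

definition A1 :: "nat \<Rightarrow> nat \<Rightarrow> (real \<Rightarrow> real) \<Rightarrow> (nat \<Rightarrow> nat \<Rightarrow> real) \<Rightarrow> (nat \<Rightarrow> real \<Rightarrow> real \<Rightarrow> (nat \<Rightarrow> real) \<Rightarrow> nat \<Rightarrow> nat \<Rightarrow> real) \<Rightarrow> bool" where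
  "A1 K L \<alpha> \<pi> br \<longleftrightarrow> (\<forall>l<L. \<forall>s t. 0 \<le> s \<longrightarrow> s < t \<longrightarrow> t \<le> 1 \<longrightarrow>
      (\<forall>xs<K. \<forall>xt<K. \<forall>\<nu>. simplex K \<nu> \<longrightarrow> 0 < q0 \<alpha> \<pi> l t xt \<nu> \<longrightarrow>
         br l s t \<nu> xt xs = qfwd \<alpha> \<pi> l s t xt xs * q0 \<alpha> \<pi> l s xs \<nu> / q0 \<alpha> \<pi> l t xt \<nu>))"

(* KL divergence on {..<K}, with 0 log 0 = 0 and value +infinity if support condition fails *)
definition KL :: "nat \<Rightarrow> (nat \<Rightarrow> real) \<Rightarrow> (nat \<Rightarrow> real) \<Rightarrow> ereal" where
  "KL K p q = (if \<exists>x<K. 0 < p x \<and> q x \<le> 0 then \<infinity>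
               else ereal (\<Sum>x\<in>{x. x < K \<and> 0 < p x}. p x * ln (p x / q x)))"

definition grid :: "nat \<Rightarrow> (nat \<Rightarrow> real) \<Rightarrow> bool" where
  "grid n tg \<longleftrightarrow> 1 \<le> n \<and> tg 0 = 0 \<and> tg n = 1 \<and> (\<forall>i<n. tg i < tg (Suc i))"

definition predictor :: "nat \<Rightarrow> nat \<Rightarrow> ((nat \<Rightarrow> nat) \<Rightarrow> real \<Rightarrow> nat \<Rightarrow> nat \<Rightarrow> real) \<Rightarrow> bool" where
  "predictor K L d \<longleftrightarrow> (\<forall>x\<in>seqs K L. \<forall>t\<in>{0..1}. \<forall>l<L. simplex K (d x t l))"

(* objective J(d); expectation over X_{t_i} ~ p_{t_i} written as a finite sum over its support *)
definition Jobj :: "nat \<Rightarrow> nat \<Rightarrow> ((nat \<Rightarrow> nat) \<Rightarrow> real) \<Rightarrow> (real \<Rightarrow> real) \<Rightarrow> (nat \<Rightarrow> nat \<Rightarrow> real)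
    \<Rightarrow> (nat \<Rightarrow> real \<Rightarrow> real \<Rightarrow> (nat \<Rightarrow> real) \<Rightarrow> nat \<Rightarrow> nat \<Rightarrow> real) \<Rightarrow> nat \<Rightarrow> (nat \<Rightarrow> real)
    \<Rightarrow> ((nat \<Rightarrow> nat) \<Rightarrow> real \<Rightarrow> nat \<Rightarrow> nat \<Rightarrow> real) \<Rightarrow> ereal" where
  "Jobj K L p0 \<alpha> \<pi> br n tg d =
     (\<Sum>i\<in>{1..n}. \<Sum>l<L. \<Sum>x\<in>{x\<in>seqs K L. 0 < pt K L p0 \<alpha> \<pi> (tg i) x}.
        ereal (pt K L p0 \<alpha> \<pi> (tg i) x) *
        KL K (prev K L p0 \<alpha> \<pi> l (tg (i - 1)) (tg i) x) (br l (tg (i - 1)) (tg i) (d x (tg i) l) (x l)))"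

definition unif :: "nat \<Rightarrow> nat \<Rightarrow> nat \<Rightarrow> real" where
  "unif K l y = (if y < K then 1 / real K else 0)"

definition canon :: "nat \<Rightarrow> (real \<Rightarrow> real) \<Rightarrow> nat \<Rightarrow> real \<Rightarrow> real \<Rightarrow> (nat \<Rightarrow> real) \<Rightarrow> nat \<Rightarrow> nat \<Rightarrow> real" where
  "canon K \<alpha> l s t \<nu> k = (\<lambda>x. if x < K then
      (real K * \<alpha> t * \<nu> k * (if x = k then 1 else 0)
       + (\<alpha> t / \<alpha> s - \<alpha> t) * (if x = k then 1 else 0)
       + (\<alpha> s - \<alpha> t) * \<nu> x
       + (1 - \<alpha> t / \<alpha> s) * (1 - \<alpha> s) / real K)
      / (real K * \<alpha> t * \<nu> k + 1 - \<alpha> t)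
    else 0)"

end

theory Submission
  imports Defs
begin

(* Each forward chain acts independently on the positions, so the joint law of
   (X_0, X_s^l, X_t) factorises as p_0(x_0) * q(x_s^l | x_0^l) q(x_t^l | x_s^l) * prod_(j ~= l) q(x_t^j | x_0^j).
   Summing out x_0 shows that the reverse marginal p_(s|t)^l is the one-token Bayes bridge
   q(x_t^l | x_s) q_(s|0)(x_s | nu) / q_(t|0)(x_t^l | nu), evaluated at the law nu of X_0^l given only the
   other positions of x_t: the kernel q_(s|0)(x_s | nu) is affine in nu, so averaging over that
   leave-one-out posterior is the same as plugging in its mean. Under (A1) the reverse marginal is
   therefore the bridge at the leave-one-out mean, every KL term of J vanishes there, and J >= 0
   by Gibbs' inequality. In the uniform case the bridge at e_k determines nu: its k-th coordinate
   is a Moebius function of nu_k with determinant (alpha_s - alpha_t)/K > 0, and the remaining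
   coordinates are then affine in nu_x. *)

section \<open>One-token kernels and the Bayes bridge\<close>

(* The right-hand side of (A1), extended by 0 outside the vocabulary. *)
definition bayes_bridge :: "nat \<Rightarrow> (real \<Rightarrow> real) \<Rightarrow> (nat \<Rightarrow> nat \<Rightarrow> real) \<Rightarrow> nat \<Rightarrow> real \<Rightarrow> real
    \<Rightarrow> (nat \<Rightarrow> real) \<Rightarrow> nat \<Rightarrow> nat \<Rightarrow> real" where
  "bayes_bridge K \<alpha> \<pi> l s t \<nu> y = (\<lambda>x. if x < K
     then qfwd \<alpha> \<pi> l s t y x * q0 \<alpha> \<pi> l s x \<nu> / q0 \<alpha> \<pi> l t y \<nu> else 0)"

lemma schedule_ratio:
  assumes "schedule \<alpha>" and "0 \<le> s" "s \<le> t" "t \<le> 1"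
  shows "\<alpha> s * (\<alpha> t / \<alpha> s) = \<alpha> t" and "0 \<le> \<alpha> t / \<alpha> s" and "\<alpha> t / \<alpha> s \<le> 1"
proof -
  have "0 \<le> \<alpha> t" "\<alpha> t \<le> \<alpha> s" using assms unfolding schedule_def by auto
  then show "\<alpha> s * (\<alpha> t / \<alpha> s) = \<alpha> t" "0 \<le> \<alpha> t / \<alpha> s" "\<alpha> t / \<alpha> s \<le> 1"
    by (auto simp: divide_le_eq_1)
qed

lemma simplex_nonneg: "simplex K \<nu> \<Longrightarrow> 0 \<le> \<nu> j"
  unfolding simplex_def by (cases "j < K") auto

lemma simplex_indicator: "a < K \<Longrightarrow> simplex K (\<lambda>j. if j = a then 1 else 0)"
  unfolding simplex_def by simp

lemma qfwd_nonneg: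
  assumes "schedule \<alpha>" and "0 \<le> s" "s \<le> t" "t \<le> 1" and "simplex K (\<pi> l)"
  shows "0 \<le> qfwd \<alpha> \<pi> l s t y x"
  using schedule_ratio[OF assms(1-4)] simplex_nonneg[OF assms(5)]
  unfolding qfwd_def by (auto intro!: add_nonneg_nonneg mult_nonneg_nonneg)

lemma qfwd_from_0: "\<alpha> 0 = 1 \<Longrightarrow> qfwd \<alpha> \<pi> l 0 u y a = q0 \<alpha> \<pi> l u y (\<lambda>j. if j = a then 1 else 0)"
  unfolding qfwd_def q0_def by simp

lemma sum_qfwd_q0:
  assumes "schedule \<alpha>" and "0 \<le> s" "s \<le> t" "t \<le> 1" and "simplex K (\<pi> l)"
    and "simplex K \<nu>" and "y < K"
  shows "(\<Sum>x<K. qfwd \<alpha> \<pi> l s t y x * q0 \<alpha> \<pi> l s x \<nu>) = q0 \<alpha> \<pi> l t y \<nu>"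
proof -
  define r where "r = \<alpha> t / \<alpha> s"
  have r: "\<alpha> s * r = \<alpha> t" using schedule_ratio[OF assms(1-4)] r_def by simp
  have sums: "(\<Sum>x<K. \<pi> l x) = 1" "(\<Sum>x<K. \<nu> x) = 1" using assms(5,6) unfolding simplex_def by auto
  have "(\<Sum>x<K. qfwd \<alpha> \<pi> l s t y x * q0 \<alpha> \<pi> l s x \<nu>)
     = (\<Sum>x<K. (if x = y then r * q0 \<alpha> \<pi> l s x \<nu> else 0)
          + ((1 - r) * \<pi> l y * \<alpha> s) * \<nu> x + ((1 - r) * \<pi> l y * (1 - \<alpha> s)) * \<pi> l x)"
    unfolding qfwd_def q0_def r_def[symmetric] by (rule sum.cong) (auto simp: algebra_simps)
  also have "\<dots> = r * q0 \<alpha> \<pi> l s y \<nu> + (1 - r) * \<pi> l y"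
    using assms(7) sums by (simp add: sum.distrib flip: sum_distrib_left) (simp add: algebra_simps)
  also have "\<dots> = q0 \<alpha> \<pi> l t y \<nu>"
    unfolding q0_def r[symmetric] by (simp add: algebra_simps)
  finally show ?thesis .
qed

lemma sum_qfwd_qfwd:
  assumes "schedule \<alpha>" and "0 \<le> s" "s \<le> t" "t \<le> 1" and "simplex K (\<pi> l)"
    and "a < K" and "y < K"
  shows "(\<Sum>x<K. qfwd \<alpha> \<pi> l 0 s x a * qfwd \<alpha> \<pi> l s t y x) = qfwd \<alpha> \<pi> l 0 t y a"
proof -
  have "\<alpha> 0 = 1" using assms(1) unfolding schedule_def by simp
  with sum_qfwd_q0[where \<pi>=\<pi> and l=l, OF assms(1-5) simplex_indicator[OF assms(6)] assms(7)] show ?thesis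
    by (simp add: qfwd_from_0 mult.commute)
qed

lemma q0_eq_mixture:
  assumes "\<alpha> 0 = 1" and "simplex K \<nu>" and "y < K"
  shows "(\<Sum>k<K. \<nu> k * qfwd \<alpha> \<pi> l 0 u y k) = q0 \<alpha> \<pi> l u y \<nu>"
proof -
  have "(\<Sum>k<K. \<nu> k * qfwd \<alpha> \<pi> l 0 u y k)
      = (\<Sum>k<K. (if k = y then \<alpha> u * \<nu> k else 0) + ((1 - \<alpha> u) * \<pi> l y) * \<nu> k)"
    unfolding qfwd_def assms(1) by (rule sum.cong) (auto simp: algebra_simps)
  also have "\<dots> = q0 \<alpha> \<pi> l u y \<nu>"
    using assms(2,3) unfolding simplex_def q0_def by (simp add: sum.distrib flip: sum_distrib_left)
  finally show ?thesis .
qed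

lemma simplex_bayes_bridge:
  assumes "schedule \<alpha>" and "0 \<le> s" "s \<le> t" "t \<le> 1" and "simplex K (\<pi> l)"
    and "simplex K \<nu>" and "y < K" and "0 < q0 \<alpha> \<pi> l t y \<nu>"
  shows "simplex K (bayes_bridge K \<alpha> \<pi> l s t \<nu> y)"
proof -
  have "\<alpha> s \<le> 1" using assms(1-4) unfolding schedule_def by simp
  then have "0 \<le> q0 \<alpha> \<pi> l s x \<nu>" for x
    using simplex_nonneg[OF assms(5)] simplex_nonneg[OF assms(6)] assms(1-4)
    unfolding q0_def schedule_def by simp
  then have "0 \<le> qfwd \<alpha> \<pi> l s t y x * q0 \<alpha> \<pi> l s x \<nu> / q0 \<alpha> \<pi> l t y \<nu>" for x
    using qfwd_nonneg[where \<pi>=\<pi> and l=l, OF assms(1-5)] assms(8) by simp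
  moreover have "(\<Sum>x<K. bayes_bridge K \<alpha> \<pi> l s t \<nu> y x) = 1"
    using sum_qfwd_q0[where \<pi>=\<pi> and l=l, OF assms(1-7)] assms(8) unfolding bayes_bridge_def
    by (simp add: sum_divide_distrib[symmetric])
  ultimately show ?thesis unfolding simplex_def bayes_bridge_def by simp
qed

lemma A1_imp_eq_bayes_bridge:
  assumes "A1 K L \<alpha> \<pi> br" and "bridge_ext K L br" and "l < L" and "0 \<le> s" "s < t" "t \<le> 1"
    and "simplex K \<nu>" and "y < K" and "0 < q0 \<alpha> \<pi> l t y \<nu>"
  shows "br l s t \<nu> y = bayes_bridge K \<alpha> \<pi> l s t \<nu> y"
proof
  fix x
  have "simplex K (br l s t \<nu> y)" using assms(2-8) unfolding bridge_ext_def by blast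
  then show "br l s t \<nu> y x = bayes_bridge K \<alpha> \<pi> l s t \<nu> y x"
    using assms unfolding A1_def bayes_bridge_def simplex_def by auto
qed

lemma bayes_bridge_inj:
  assumes "schedule \<alpha>" and "0 \<le> s" "s < t" "t \<le> 1" and "\<alpha> t < \<alpha> s"
    and "simplex K (\<pi> l)" and "0 < \<pi> l k" and "k < K" and "simplex K \<nu>" "simplex K \<nu>'"
    and eq: "bayes_bridge K \<alpha> \<pi> l s t \<nu> k = bayes_bridge K \<alpha> \<pi> l s t \<nu>' k"
  shows "\<nu> = \<nu>'"
proof -
  define r where "r = \<alpha> t / \<alpha> s"
  have a: "0 \<le> \<alpha> t" "\<alpha> s \<le> 1" using assms(1-4) unfolding schedule_def by auto
  have r: "0 \<le> r" "r < 1" "\<alpha> s * r = \<alpha> t" using a assms(5) unfolding r_def by auto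
  have denom_pos: "0 < q0 \<alpha> \<pi> l t k \<mu>" if "simplex K \<mu>" for \<mu>
    using simplex_nonneg[OF that, of k] a assms(5,7) unfolding q0_def
    by (intro add_nonneg_pos) auto
  have fwd_pos: "0 < qfwd \<alpha> \<pi> l s t k x" for x
    using r assms(7) unfolding qfwd_def r_def[symmetric] by (intro add_nonneg_pos) auto
  have ratio: "q0 \<alpha> \<pi> l s x \<nu> / q0 \<alpha> \<pi> l t k \<nu> = q0 \<alpha> \<pi> l s x \<nu>' / q0 \<alpha> \<pi> l t k \<nu>'"
    if "x < K" for x
  proof -
    have "qfwd \<alpha> \<pi> l s t k x * (q0 \<alpha> \<pi> l s x \<nu> / q0 \<alpha> \<pi> l t k \<nu>)
        = qfwd \<alpha> \<pi> l s t k x * (q0 \<alpha> \<pi> l s x \<nu>' / q0 \<alpha> \<pi> l t k \<nu>')"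
      using fun_cong[OF eq, of x] that unfolding bayes_bridge_def by simp
    then show ?thesis using fwd_pos[of x] by (metis mult_left_cancel less_irrefl)
  qed
  \<comment> \<open>at \<open>x = k\<close> this is a Moebius map in \<open>\<nu> k\<close> with determinant \<open>(\<alpha> s - \<alpha> t) * \<pi> l k > 0\<close>\<close>
  have "(\<alpha> s - \<alpha> t) * \<pi> l k * (\<nu> k - \<nu>' k) = 0"
    using ratio[OF assms(8)] denom_pos[OF assms(9)] denom_pos[OF assms(10)]
    unfolding q0_def by (simp add: frac_eq_eq algebra_simps)
  then have "\<nu> k = \<nu>' k" using assms(5,7) by simp
  then have "q0 \<alpha> \<pi> l s x \<nu> = q0 \<alpha> \<pi> l s x \<nu>'" if "x < K" for x
    using ratio[OF that] denom_pos[OF assms(9)] unfolding q0_def by simp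
  then have "\<nu> x = \<nu>' x" if "x < K" for x
    using that a assms(2-5) unfolding q0_def by simp
  then show ?thesis using assms(9,10) unfolding simplex_def by (metis ext not_less)
qed

section \<open>Leave-one-out posterior\<close>

lemma finite_seqs: "finite (seqs K L)"
  unfolding seqs_def by (simp add: finite_PiE)

lemma seqs_less: "x \<in> seqs K L \<Longrightarrow> j < L \<Longrightarrow> x j < K"
  unfolding seqs_def by auto

lemma seqs_slice_eq_PiE:
  assumes "x < K" "l < L"
  shows "{xs\<in>seqs K L. xs l = x} = PiE {..<L} (\<lambda>j. if j = l then {x} else {..<K})"
proof (intro set_eqI iffI)
  fix xs assume "xs \<in> {xs\<in>seqs K L. xs l = x}"
  then show "xs \<in> PiE {..<L} (\<lambda>j. if j = l then {x} else {..<K})"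
    unfolding seqs_def by (auto simp: PiE_iff)
next
  fix xs assume xs: "xs \<in> PiE {..<L} (\<lambda>j. if j = l then {x} else {..<K})"
  then have "xs \<in> seqs K L"
    unfolding seqs_def by (rule PiE_mono[THEN subsetD, rotated]) (use assms in auto)
  moreover have "xs l = x" using PiE_mem[OF xs, of l] assms by simp
  ultimately show "xs \<in> {xs\<in>seqs K L. xs l = x}" by simp
qed

lemma sum_seqs_slice_prod:
  fixes g :: "nat \<Rightarrow> nat \<Rightarrow> real"
  assumes "x < K" "l < L"
  shows "(\<Sum>xs\<in>{xs\<in>seqs K L. xs l = x}. \<Prod>j<L. g j (xs j)) = g l x * (\<Prod>j\<in>{..<L}-{l}. \<Sum>y<K. g j y)"
proof -
  have "(\<Sum>xs\<in>{xs\<in>seqs K L. xs l = x}. \<Prod>j<L. g j (xs j))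
       = (\<Prod>j<L. \<Sum>y\<in>(if j = l then {x} else {..<K}). g j y)"
    unfolding seqs_slice_eq_PiE[OF assms] by (rule prod_sum_PiE[symmetric]) auto
  also have "\<dots> = (\<Sum>y\<in>{x}. g l y) * (\<Prod>j\<in>{..<L}-{l}. \<Sum>y\<in>(if j = l then {x} else {..<K}). g j y)"
    using assms by (subst prod.remove[of _ l]) auto
  also have "(\<Prod>j\<in>{..<L}-{l}. \<Sum>y\<in>(if j = l then {x} else {..<K}). g j y) = (\<Prod>j\<in>{..<L}-{l}. \<Sum>y<K. g j y)"
    by (rule prod.cong) auto
  finally show ?thesis by simp
qed

lemma sum_seqs_by_position:
  fixes f :: "(nat \<Rightarrow> nat) \<Rightarrow> real"
  assumes "l < L"
  shows "(\<Sum>x0\<in>seqs K L. f x0 * h (x0 l)) = (\<Sum>k<K. (\<Sum>x0\<in>{x0\<in>seqs K L. x0 l = k}. f x0) * h k)"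
proof -
  have "(\<Sum>x0\<in>seqs K L. f x0 * h (x0 l)) = (\<Sum>k<K. \<Sum>x0\<in>{x0\<in>seqs K L. x0 l = k}. f x0 * h (x0 l))"
    by (rule sum.group[symmetric]) (auto simp: finite_seqs seqs_less assms)
  then show ?thesis by (simp add: sum_distrib_right)
qed

(* P(X_t^-l = xt^-l), the normaliser of loo_post. *)
definition loo_marginal :: "nat \<Rightarrow> nat \<Rightarrow> ((nat \<Rightarrow> nat) \<Rightarrow> real) \<Rightarrow> (real \<Rightarrow> real) \<Rightarrow> (nat \<Rightarrow> nat \<Rightarrow> real)
    \<Rightarrow> nat \<Rightarrow> real \<Rightarrow> (nat \<Rightarrow> nat) \<Rightarrow> real" where
  "loo_marginal K L p0 \<alpha> \<pi> l t xt = (\<Sum>x0\<in>seqs K L. loo_w L p0 \<alpha> \<pi> l t xt x0)"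

lemma p0_qseq_eq_loo_w:
  assumes "l < L"
  shows "p0 x0 * qseq L \<alpha> \<pi> 0 t xt x0 = loo_w L p0 \<alpha> \<pi> l t xt x0 * qfwd \<alpha> \<pi> l 0 t (xt l) (x0 l)"
  using assms unfolding qseq_def loo_w_def by (simp add: prod.remove[of _ l] algebra_simps)

lemma sum_loo_w_by_position:
  assumes "l < L" and "loo_marginal K L p0 \<alpha> \<pi> l t xt \<noteq> 0"
  shows "(\<Sum>x0\<in>seqs K L. loo_w L p0 \<alpha> \<pi> l t xt x0 * h (x0 l))
       = loo_marginal K L p0 \<alpha> \<pi> l t xt * (\<Sum>k<K. loo_mean K L p0 \<alpha> \<pi> xt t l k * h k)"
  using assms unfolding sum_seqs_by_position[OF assms(1)] sum_distrib_left
  by (simp add: loo_mean_def loo_post_def loo_marginal_def)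

lemma pt_eq_sum_loo_w:
  assumes "l < L"
  shows "pt K L p0 \<alpha> \<pi> t xt = (\<Sum>x0\<in>seqs K L. loo_w L p0 \<alpha> \<pi> l t xt x0 * qfwd \<alpha> \<pi> l 0 t (xt l) (x0 l))"
  unfolding pt_def p0_qseq_eq_loo_w[OF assms] ..

context
  fixes K L :: nat and p0 :: "(nat \<Rightarrow> nat) \<Rightarrow> real" and \<alpha> :: "real \<Rightarrow> real" and \<pi> :: "nat \<Rightarrow> nat \<Rightarrow> real"
  assumes dist: "is_dist K L p0" and sch: "schedule \<alpha>" and pi: "\<forall>l<L. simplex K (\<pi> l)"
begin

lemma loo_w_nonneg:
  assumes "x0 \<in> seqs K L" and "0 \<le> t" "t \<le> 1"
  shows "0 \<le> loo_w L p0 \<alpha> \<pi> l t xt x0"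
proof -
  have "0 \<le> p0 x0" using dist assms(1) unfolding is_dist_def by auto
  moreover have "0 \<le> qfwd \<alpha> \<pi> j 0 t (xt j) (x0 j)" if "j < L" for j
    using qfwd_nonneg[OF sch order.refl assms(2,3)] pi that by auto
  ultimately show ?thesis unfolding loo_w_def by (auto intro!: mult_nonneg_nonneg prod_nonneg)
qed

lemma simplex_loo_mean:
  assumes "l < L" and "0 \<le> t" "t \<le> 1" and "0 < loo_marginal K L p0 \<alpha> \<pi> l t xt"
  shows "simplex K (loo_mean K L p0 \<alpha> \<pi> xt t l)"
proof -
  define W where "W k = (\<Sum>x0\<in>{x0\<in>seqs K L. x0 l = k}. loo_w L p0 \<alpha> \<pi> l t xt x0)" for k
  have "0 \<le> W k" for k
    using loo_w_nonneg[OF _ assms(2,3)] unfolding W_def by (auto intro: sum_nonneg)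
  moreover have "(\<Sum>k<K. W k) = loo_marginal K L p0 \<alpha> \<pi> l t xt"
    using sum_seqs_by_position[where h="\<lambda>_. 1", OF assms(1)] unfolding loo_marginal_def W_def
    by simp
  moreover have "loo_mean K L p0 \<alpha> \<pi> xt t l = (\<lambda>k. if k < K then W k / loo_marginal K L p0 \<alpha> \<pi> l t xt else 0)"
    unfolding loo_mean_def loo_post_def W_def loo_marginal_def by simp
  ultimately show ?thesis
    using assms(4) unfolding simplex_def by (simp add: sum_divide_distrib[symmetric])
qed

lemma loo_marginal_pos:
  assumes "l < L" and "0 \<le> t" "t \<le> 1" and "0 < pt K L p0 \<alpha> \<pi> t xt"
  shows "0 < loo_marginal K L p0 \<alpha> \<pi> l t xt"
proof (rule ccontr)
  have nonneg: "\<forall>x0\<in>seqs K L. 0 \<le> loo_w L p0 \<alpha> \<pi> l t xt x0"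
    using loo_w_nonneg[OF _ assms(2,3)] by blast
  assume "\<not> 0 < loo_marginal K L p0 \<alpha> \<pi> l t xt"
  moreover have "0 \<le> loo_marginal K L p0 \<alpha> \<pi> l t xt"
    unfolding loo_marginal_def by (rule sum_nonneg) (use nonneg in blast)
  ultimately have "loo_marginal K L p0 \<alpha> \<pi> l t xt = 0" by simp
  then have "\<forall>x0\<in>seqs K L. loo_w L p0 \<alpha> \<pi> l t xt x0 = 0"
    using sum_nonneg_eq_0_iff[OF finite_seqs, where f="loo_w L p0 \<alpha> \<pi> l t xt"] nonneg
    unfolding loo_marginal_def by blast
  then show False using assms(4) unfolding pt_eq_sum_loo_w[OF assms(1)] by simp
qed

lemma simplex_loo_mean_at:
  assumes "l < L" and "0 < t" "t \<le> 1" and "xt \<in> seqs K L" and "0 < pt K L p0 \<alpha> \<pi> t xt"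
  shows "simplex K (loo_mean K L p0 \<alpha> \<pi> xt t l)"
  using simplex_loo_mean[OF assms(1) _ assms(3) loo_marginal_pos[OF assms(1) _ assms(3,5)]] assms(2)
  by simp

lemma sum_loo_w_qfwd_eq_q0:
  assumes "l < L" and "0 \<le> t" "t \<le> 1" and "0 < loo_marginal K L p0 \<alpha> \<pi> l t xt" and "y < K"
  shows "(\<Sum>x0\<in>seqs K L. loo_w L p0 \<alpha> \<pi> l t xt x0 * qfwd \<alpha> \<pi> l 0 u y (x0 l))
       = loo_marginal K L p0 \<alpha> \<pi> l t xt * q0 \<alpha> \<pi> l u y (loo_mean K L p0 \<alpha> \<pi> xt t l)"
proof -
  have "\<alpha> 0 = 1" using sch unfolding schedule_def by simp
  then show ?thesis
    unfolding sum_loo_w_by_position[OF assms(1) assms(4)[THEN less_imp_neq, symmetric]]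
    using q0_eq_mixture simplex_loo_mean[OF assms(1-4)] assms(5) by simp
qed

lemma pt_eq_loo_marginal_q0:
  assumes "l < L" and "0 \<le> t" "t \<le> 1" and "xt \<in> seqs K L" and "0 < pt K L p0 \<alpha> \<pi> t xt"
  shows "pt K L p0 \<alpha> \<pi> t xt = loo_marginal K L p0 \<alpha> \<pi> l t xt * q0 \<alpha> \<pi> l t (xt l) (loo_mean K L p0 \<alpha> \<pi> xt t l)"
  unfolding pt_eq_sum_loo_w[OF assms(1)]
  by (rule sum_loo_w_qfwd_eq_q0[OF assms(1-3) loo_marginal_pos[OF assms(1-3,5)] seqs_less[OF assms(4,1)]])

lemma q0_loo_mean_pos:
  assumes "l < L" and "0 \<le> t" "t \<le> 1" and "xt \<in> seqs K L" and "0 < pt K L p0 \<alpha> \<pi> t xt"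
  shows "0 < q0 \<alpha> \<pi> l t (xt l) (loo_mean K L p0 \<alpha> \<pi> xt t l)"
  using pt_eq_loo_marginal_q0[OF assms] loo_marginal_pos[OF assms(1-3,5)] assms(5)
  by (simp add: zero_less_mult_iff)

lemma sum_slice_joint2:
  assumes "l < L" and "0 \<le> s" "s \<le> t" "t \<le> 1" and "xt \<in> seqs K L" and "x < K"
  shows "(\<Sum>xs\<in>{xs\<in>seqs K L. xs l = x}. joint2 K L p0 \<alpha> \<pi> s t xs xt)
       = qfwd \<alpha> \<pi> l s t (xt l) x * (\<Sum>x0\<in>seqs K L. loo_w L p0 \<alpha> \<pi> l t xt x0 * qfwd \<alpha> \<pi> l 0 s x (x0 l))"
proof -
  define g where "g x0 j y = qfwd \<alpha> \<pi> j 0 s y (x0 j) * qfwd \<alpha> \<pi> j s t (xt j) y" for x0 j y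
  have paths: "(\<Sum>xs\<in>{xs\<in>seqs K L. xs l = x}. qseq L \<alpha> \<pi> 0 s xs x0 * qseq L \<alpha> \<pi> s t xt xs)
      = g x0 l x * (\<Prod>j\<in>{..<L} - {l}. qfwd \<alpha> \<pi> j 0 t (xt j) (x0 j))" if "x0 \<in> seqs K L" for x0
  proof -
    \<comment> \<open>Chapman-Kolmogorov at every position other than \<open>l\<close>\<close>
    have "(\<Prod>j\<in>{..<L}-{l}. \<Sum>y<K. g x0 j y) = (\<Prod>j\<in>{..<L} - {l}. qfwd \<alpha> \<pi> j 0 t (xt j) (x0 j))"
      unfolding g_def using sum_qfwd_qfwd[OF sch assms(2-4)] pi seqs_less[OF that] seqs_less[OF assms(5)]
      by (intro prod.cong) auto
    then show ?thesis
      using sum_seqs_slice_prod[OF assms(6,1), of "g x0"] unfolding qseq_def g_def by (simp add: prod.distrib)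
  qed
  have "(\<Sum>xs\<in>{xs\<in>seqs K L. xs l = x}. joint2 K L p0 \<alpha> \<pi> s t xs xt)
      = (\<Sum>x0\<in>seqs K L. p0 x0 * (\<Sum>xs\<in>{xs\<in>seqs K L. xs l = x}. qseq L \<alpha> \<pi> 0 s xs x0 * qseq L \<alpha> \<pi> s t xt xs))"
    unfolding joint2_def by (subst sum.swap) (simp add: sum_distrib_left mult.assoc)
  also have "\<dots> = (\<Sum>x0\<in>seqs K L. loo_w L p0 \<alpha> \<pi> l t xt x0 * g x0 l x)"
    by (rule sum.cong) (simp_all add: paths loo_w_def)
  finally show ?thesis
    unfolding g_def by (simp add: sum_distrib_left algebra_simps)
qed

theorem prev_eq_bayes_bridge_loo_mean:
  assumes "l < L" and "0 \<le> s" "s < t" "t \<le> 1" and "xt \<in> seqs K L" and "0 < pt K L p0 \<alpha> \<pi> t xt"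
  shows "prev K L p0 \<alpha> \<pi> l s t xt = bayes_bridge K \<alpha> \<pi> l s t (loo_mean K L p0 \<alpha> \<pi> xt t l) (xt l)"
proof
  fix x
  have t: "0 \<le> t" using assms(2,3) by simp
  note Z = loo_marginal_pos[OF assms(1) t assms(4,6)]
  show "prev K L p0 \<alpha> \<pi> l s t xt x = bayes_bridge K \<alpha> \<pi> l s t (loo_mean K L p0 \<alpha> \<pi> xt t l) (xt l) x"
  proof (cases "x < K")
    case True
    then show ?thesis
      unfolding prev_def bayes_bridge_def
        sum_slice_joint2[OF assms(1,2) less_imp_le[OF assms(3)] assms(4,5) True]
        sum_loo_w_qfwd_eq_q0[OF assms(1) t assms(4) Z True] pt_eq_loo_marginal_q0[OF assms(1) t assms(4-6)]
      using Z by simp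
  next
    case False
    then have empty: "{xs\<in>seqs K L. xs l = x} = {}" using seqs_less assms(1) by fastforce
    show ?thesis using False unfolding prev_def bayes_bridge_def empty by simp
  qed
qed

end

section \<open>Kullback-Leibler divergence and the objective\<close>

lemma diff_le_mult_ln_div:
  fixes p q :: real
  assumes "0 < p" "0 < q"
  shows "p - q \<le> p * ln (p / q)"
proof -
  have "p * ln (q / p) \<le> p * (q / p - 1)"
    using assms by (intro mult_left_mono ln_le_minus_one) auto
  moreover have "p * (q / p - 1) = q - p" and "ln (p / q) = - ln (q / p)"
    using assms by (simp_all add: field_simps ln_div)
  ultimately show ?thesis by simp
qed

lemma mult_ln_div_eq_diff_iff:
  fixes p q :: real
  assumes "0 < p" "0 < q"
  shows "p * ln (p / q) = p - q \<longleftrightarrow> p = q"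
proof
  assume "p * ln (p / q) = p - q"
  then have "ln (q / p) = q / p - 1" using assms by (simp add: ln_div field_simps)
  then have "q / p = 1" using assms by (intro ln_eq_minus_one) auto
  then show "p = q" using assms by simp
qed simp

lemma KL_eq_sum_nonneg_terms:
  assumes p: "simplex K p" and q: "simplex K q" and supp: "\<forall>x<K. 0 < p x \<longrightarrow> 0 < q x"
  shows "KL K p q = ereal ((\<Sum>x\<in>{x. x < K \<and> 0 < p x}. p x * ln (p x / q x) - (p x - q x))
                         + (\<Sum>x\<in>{x. x < K \<and> p x = 0}. q x))"
proof -
  define P where "P = {x. x < K \<and> 0 < p x}"
  define Q where "Q = {x. x < K \<and> p x = 0}"
  have PQ: "{..<K} = P \<union> Q" "P \<inter> Q = {}" "finite P" "finite Q"
    using simplex_nonneg[OF p] unfolding P_def Q_def by (auto simp: order.order_iff_strict)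
  have "(\<Sum>x\<in>Q. p x) = 0" unfolding Q_def by simp
  then have "(\<Sum>x\<in>P. p x) = 1"
    using p sum.union_disjoint[OF PQ(3,4,2), of p] unfolding PQ(1)[symmetric] simplex_def by simp
  moreover have "(\<Sum>x\<in>P. q x) + (\<Sum>x\<in>Q. q x) = 1"
    using q sum.union_disjoint[OF PQ(3,4,2), of q] unfolding PQ(1)[symmetric] simplex_def by simp
  ultimately show ?thesis
    using supp unfolding KL_def P_def[symmetric] Q_def[symmetric]
    by (auto simp: sum_subtractf not_le)
qed

lemma KL_nonneg:
  assumes "simplex K p" "simplex K q"
  shows "0 \<le> KL K p q"
proof (cases "\<forall>x<K. 0 < p x \<longrightarrow> 0 < q x")
  case True
  then show ?thesis
    unfolding KL_eq_sum_nonneg_terms[OF assms True]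
    using diff_le_mult_ln_div simplex_nonneg[OF assms(2)]
    by (auto intro!: add_nonneg_nonneg sum_nonneg)
next
  case False
  then show ?thesis unfolding KL_def by auto
qed

lemma KL_eq_0_iff:
  assumes p: "simplex K p" and q: "simplex K q"
  shows "KL K p q = 0 \<longleftrightarrow> p = q"
proof
  assume KL0: "KL K p q = 0"
  then have supp: "\<forall>x<K. 0 < p x \<longrightarrow> 0 < q x" unfolding KL_def by (auto split: if_splits)
  define f where "f x = p x * ln (p x / q x) - (p x - q x)" for x
  have f: "0 \<le> f x" if "x < K" "0 < p x" for x
    using diff_le_mult_ln_div[of "p x" "q x"] supp that unfolding f_def by auto
  have "(\<Sum>x\<in>{x. x < K \<and> 0 < p x}. f x) + (\<Sum>x\<in>{x. x < K \<and> p x = 0}. q x) = 0"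
    using KL0 unfolding KL_eq_sum_nonneg_terms[OF p q supp] f_def by simp
  moreover have "0 \<le> (\<Sum>x\<in>{x. x < K \<and> 0 < p x}. f x)" "0 \<le> (\<Sum>x\<in>{x. x < K \<and> p x = 0}. q x)"
    using f simplex_nonneg[OF q] by (auto intro: sum_nonneg)
  ultimately have "(\<Sum>x\<in>{x. x < K \<and> 0 < p x}. f x) = 0" "(\<Sum>x\<in>{x. x < K \<and> p x = 0}. q x) = 0"
    by simp_all
  then have "\<forall>x\<in>{x. x < K \<and> 0 < p x}. f x = 0" "\<forall>x\<in>{x. x < K \<and> p x = 0}. q x = 0"
    using f simplex_nonneg[OF q] by (subst (asm) sum_nonneg_eq_0_iff; auto)+
  then have "p x = q x" if "x < K" for x
    using mult_ln_div_eq_diff_iff[of "p x" "q x"] supp simplex_nonneg[OF p, of x] that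
    unfolding f_def by (cases "p x = 0") auto
  then show "p = q"
    using p q unfolding simplex_def by (metis ext not_less)
qed (simp add: KL_def)

context
  fixes K L :: nat and p0 :: "(nat \<Rightarrow> nat) \<Rightarrow> real" and \<alpha> :: "real \<Rightarrow> real" and \<pi> :: "nat \<Rightarrow> nat \<Rightarrow> real"
    and br :: "nat \<Rightarrow> real \<Rightarrow> real \<Rightarrow> (nat \<Rightarrow> real) \<Rightarrow> nat \<Rightarrow> nat \<Rightarrow> real"
    and n :: nat and tg :: "nat \<Rightarrow> real" and d :: "(nat \<Rightarrow> nat) \<Rightarrow> real \<Rightarrow> nat \<Rightarrow> nat \<Rightarrow> real"
  assumes simplex_terms: "\<And>i l x. i \<in> {1..n} \<Longrightarrow> l < L \<Longrightarrow> x \<in> seqs K L \<Longrightarrow> 0 < pt K L p0 \<alpha> \<pi> (tg i) x \<Longrightarrow>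
      simplex K (prev K L p0 \<alpha> \<pi> l (tg (i - 1)) (tg i) x)
      \<and> simplex K (br l (tg (i - 1)) (tg i) (d x (tg i) l) (x l))"
begin

lemma Jobj_nonneg_and_eq_0_iff:
  shows "0 \<le> Jobj K L p0 \<alpha> \<pi> br n tg d"
    and "Jobj K L p0 \<alpha> \<pi> br n tg d = 0 \<longleftrightarrow>
      (\<forall>i\<in>{1..n}. \<forall>l<L. \<forall>x\<in>seqs K L. 0 < pt K L p0 \<alpha> \<pi> (tg i) x \<longrightarrow>
         prev K L p0 \<alpha> \<pi> l (tg (i - 1)) (tg i) x = br l (tg (i - 1)) (tg i) (d x (tg i) l) (x l))"
proof -
  define X where "X i = {x\<in>seqs K L. 0 < pt K L p0 \<alpha> \<pi> (tg i) x}" for i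
  define T where "T i l x = ereal (pt K L p0 \<alpha> \<pi> (tg i) x) *
     KL K (prev K L p0 \<alpha> \<pi> l (tg (i - 1)) (tg i) x) (br l (tg (i - 1)) (tg i) (d x (tg i) l) (x l))" for i l x
  have J: "Jobj K L p0 \<alpha> \<pi> br n tg d = (\<Sum>i\<in>{1..n}. \<Sum>l<L. \<Sum>x\<in>X i. T i l x)"
    unfolding Jobj_def X_def T_def ..
  have fin: "finite (X i)" for i unfolding X_def using finite_seqs by simp
  have T: "0 \<le> T i l x \<and> (T i l x = 0 \<longleftrightarrow>
      prev K L p0 \<alpha> \<pi> l (tg (i - 1)) (tg i) x = br l (tg (i - 1)) (tg i) (d x (tg i) l) (x l))"
    if "i \<in> {1..n}" "l < L" "x \<in> X i" for i l x
    using simplex_terms[OF that(1,2)] that(3) KL_nonneg KL_eq_0_iff unfolding X_def T_def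
    by auto
  have inner: "0 \<le> (\<Sum>x\<in>X i. T i l x)" if "i \<in> {1..n}" "l < L" for i l
    using T that by (auto intro: sum_nonneg)
  have middle: "0 \<le> (\<Sum>l<L. \<Sum>x\<in>X i. T i l x)" if "i \<in> {1..n}" for i
    using inner that by (auto intro: sum_nonneg)
  show "0 \<le> Jobj K L p0 \<alpha> \<pi> br n tg d"
    unfolding J using middle by (auto intro: sum_nonneg)
  have inner_iff: "(\<Sum>x\<in>X i. T i l x) = 0 \<longleftrightarrow> (\<forall>x\<in>X i. T i l x = 0)"
    if "i \<in> {1..n}" "l < L" for i l
    by (rule sum_nonneg_eq_0_iff[OF fin]) (use T that in blast)
  have middle_iff: "(\<Sum>l<L. \<Sum>x\<in>X i. T i l x) = 0 \<longleftrightarrow> (\<forall>l<L. \<forall>x\<in>X i. T i l x = 0)"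
    if "i \<in> {1..n}" for i
    using sum_nonneg_eq_0_iff[of "{..<L}" "\<lambda>l. \<Sum>x\<in>X i. T i l x"] inner inner_iff that by auto
  have "Jobj K L p0 \<alpha> \<pi> br n tg d = 0 \<longleftrightarrow> (\<forall>i\<in>{1..n}. \<forall>l<L. \<forall>x\<in>X i. T i l x = 0)"
    unfolding J using sum_nonneg_eq_0_iff[of "{1..n}" "\<lambda>i. \<Sum>l<L. \<Sum>x\<in>X i. T i l x"] middle middle_iff
    by auto
  then show "Jobj K L p0 \<alpha> \<pi> br n tg d = 0 \<longleftrightarrow> (\<forall>i\<in>{1..n}. \<forall>l<L. \<forall>x\<in>seqs K L. 0 < pt K L p0 \<alpha> \<pi> (tg i) x \<longrightarrow>
         prev K L p0 \<alpha> \<pi> l (tg (i - 1)) (tg i) x = br l (tg (i - 1)) (tg i) (d x (tg i) l) (x l))"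
    using T unfolding X_def by auto
qed

end

section \<open>Optimality of the leave-one-out mean\<close>

lemma grid_mono:
  assumes "grid n tg" and "i \<le> j" "j \<le> n"
  shows "tg i \<le> tg j"
  using assms(2,3)
proof (induction j rule: dec_induct)
  case (step m)
  then have "tg i \<le> tg m" "tg m < tg (Suc m)" using assms(1) unfolding grid_def by auto
  then show ?case by simp
qed simp

lemma grid_step:
  assumes "grid n tg" and "i \<in> {1..n}"
  shows "0 \<le> tg (i - 1)" "tg (i - 1) < tg i" "tg i \<le> 1"
proof -
  have "i - 1 < n" "Suc (i - 1) = i" using assms(2) by auto
  then have "tg (i - 1) < tg i" "tg 0 = 0" "tg n = 1" using assms(1) unfolding grid_def by metis+
  then show "0 \<le> tg (i - 1)" "tg (i - 1) < tg i" "tg i \<le> 1"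
    using grid_mono[OF assms(1), of 0 "i - 1"] grid_mono[OF assms(1), of i n] assms(2) by auto
qed

context
  fixes K L :: nat and p0 :: "(nat \<Rightarrow> nat) \<Rightarrow> real" and \<alpha> :: "real \<Rightarrow> real" and \<pi> :: "nat \<Rightarrow> nat \<Rightarrow> real"
    and br :: "nat \<Rightarrow> real \<Rightarrow> real \<Rightarrow> (nat \<Rightarrow> real) \<Rightarrow> nat \<Rightarrow> nat \<Rightarrow> real"
  assumes dist: "is_dist K L p0" and sch: "schedule \<alpha>" and pi: "\<forall>l<L. simplex K (\<pi> l)"
    and ext: "bridge_ext K L br" and a1: "A1 K L \<alpha> \<pi> br"
begin

lemma prev_eq_bridge_loo_mean:
  assumes "l < L" and "0 \<le> s" "s < t" "t \<le> 1" and "xt \<in> seqs K L" and "0 < pt K L p0 \<alpha> \<pi> t xt"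
  shows "prev K L p0 \<alpha> \<pi> l s t xt = br l s t (loo_mean K L p0 \<alpha> \<pi> xt t l) (xt l)"
proof -
  have "0 < t" using assms(2,3) by linarith
  then show ?thesis
    using prev_eq_bayes_bridge_loo_mean[OF dist sch pi assms] A1_imp_eq_bayes_bridge[OF a1 ext assms(1-4)]
      simplex_loo_mean_at[OF dist sch pi assms(1) _ assms(4-6)] seqs_less[OF assms(5,1)]
      q0_loo_mean_pos[OF dist sch pi assms(1) _ assms(4-6)]
    by simp
qed

lemma simplex_prev:
  assumes "l < L" and "0 \<le> s" "s < t" "t \<le> 1" and "xt \<in> seqs K L" and "0 < pt K L p0 \<alpha> \<pi> t xt"
  shows "simplex K (prev K L p0 \<alpha> \<pi> l s t xt)"
proof -
  have "0 < t" using assms(2,3) by simp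
  then show ?thesis
    using prev_eq_bridge_loo_mean[OF assms] simplex_loo_mean_at[OF dist sch pi assms(1) _ assms(4-6)]
      seqs_less[OF assms(5,1)] ext assms(1-4) unfolding bridge_ext_def by metis
qed

lemma Jobj_loo_mean_eq_0:
  assumes "grid n tg"
  shows "Jobj K L p0 \<alpha> \<pi> br n tg (loo_mean K L p0 \<alpha> \<pi>) = 0"
proof -
  have exact: "prev K L p0 \<alpha> \<pi> l (tg (i - 1)) (tg i) x = br l (tg (i - 1)) (tg i) (loo_mean K L p0 \<alpha> \<pi> x (tg i) l) (x l)"
    and "simplex K (prev K L p0 \<alpha> \<pi> l (tg (i - 1)) (tg i) x)"
    if "i \<in> {1..n}" "l < L" "x \<in> seqs K L" "0 < pt K L p0 \<alpha> \<pi> (tg i) x" for i l x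
    using prev_eq_bridge_loo_mean[OF that(2) grid_step[OF assms that(1)] that(3,4)]
      simplex_prev[OF that(2) grid_step[OF assms that(1)] that(3,4)] by simp_all
  then show ?thesis
    using Jobj_nonneg_and_eq_0_iff(2)[where br=br and tg=tg and d="loo_mean K L p0 \<alpha> \<pi>"] by simp
qed

lemma Jobj_of_predictor:
  assumes "grid n tg" and "predictor K L d"
  shows "0 \<le> Jobj K L p0 \<alpha> \<pi> br n tg d"
    and "Jobj K L p0 \<alpha> \<pi> br n tg d = 0 \<longleftrightarrow>
      (\<forall>i\<in>{1..n}. \<forall>l<L. \<forall>x\<in>seqs K L. 0 < pt K L p0 \<alpha> \<pi> (tg i) x \<longrightarrow>
         prev K L p0 \<alpha> \<pi> l (tg (i - 1)) (tg i) x = br l (tg (i - 1)) (tg i) (d x (tg i) l) (x l))"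
proof -
  have "simplex K (prev K L p0 \<alpha> \<pi> l (tg (i - 1)) (tg i) x)
      \<and> simplex K (br l (tg (i - 1)) (tg i) (d x (tg i) l) (x l))"
    if "i \<in> {1..n}" "l < L" "x \<in> seqs K L" "0 < pt K L p0 \<alpha> \<pi> (tg i) x" for i l x
  proof
    note step = grid_step[OF assms(1) that(1)]
    show "simplex K (prev K L p0 \<alpha> \<pi> l (tg (i - 1)) (tg i) x)"
      using simplex_prev[OF that(2) step that(3,4)] .
    have "simplex K (d x (tg i) l)"
      using assms(2) step that(2,3) unfolding predictor_def by auto
    then show "simplex K (br l (tg (i - 1)) (tg i) (d x (tg i) l) (x l))"
      using ext step that(2) seqs_less[OF that(3,2)] unfolding bridge_ext_def by blast
  qed
  then show "0 \<le> Jobj K L p0 \<alpha> \<pi> br n tg d"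
    and "Jobj K L p0 \<alpha> \<pi> br n tg d = 0 \<longleftrightarrow>
      (\<forall>i\<in>{1..n}. \<forall>l<L. \<forall>x\<in>seqs K L. 0 < pt K L p0 \<alpha> \<pi> (tg i) x \<longrightarrow>
         prev K L p0 \<alpha> \<pi> l (tg (i - 1)) (tg i) x = br l (tg (i - 1)) (tg i) (d x (tg i) l) (x l))"
    by (fact Jobj_nonneg_and_eq_0_iff)+
qed

theorem Jobj_loo_mean_le:
  assumes "grid n tg" and "predictor K L d"
  shows "Jobj K L p0 \<alpha> \<pi> br n tg (loo_mean K L p0 \<alpha> \<pi>) \<le> Jobj K L p0 \<alpha> \<pi> br n tg d"
  using Jobj_loo_mean_eq_0[OF assms(1)] Jobj_of_predictor(1)[OF assms] by simp

lemma bridge_eq_if_Jobj_le_loo_mean: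
  assumes "grid n tg" and "predictor K L d"
    and "Jobj K L p0 \<alpha> \<pi> br n tg d \<le> Jobj K L p0 \<alpha> \<pi> br n tg (loo_mean K L p0 \<alpha> \<pi>)"
    and "i \<in> {1..n}" "l < L" "x \<in> seqs K L" "0 < pt K L p0 \<alpha> \<pi> (tg i) x"
  shows "br l (tg (i - 1)) (tg i) (d x (tg i) l) (x l)
       = br l (tg (i - 1)) (tg i) (loo_mean K L p0 \<alpha> \<pi> x (tg i) l) (x l)"
proof -
  have "Jobj K L p0 \<alpha> \<pi> br n tg d = 0"
    using assms(3) Jobj_loo_mean_eq_0[OF assms(1)] Jobj_of_predictor(1)[OF assms(1,2)] by simp
  then show ?thesis
    using Jobj_of_predictor(2)[OF assms(1,2)] assms(4-7)
      prev_eq_bridge_loo_mean[OF assms(5) grid_step[OF assms(1,4)] assms(6,7)] by metis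
qed

end

section \<open>Uniform noise\<close>

lemma simplex_unif: "0 < K \<Longrightarrow> simplex K (unif K l)"
  unfolding simplex_def unif_def by simp

lemma canon_eq_bayes_bridge:
  assumes "0 < K" and "0 < \<alpha> s" and "0 \<le> \<alpha> t" "\<alpha> t < 1" and "simplex K \<nu>" and "k < K"
  shows "canon K \<alpha> l s t \<nu> k = bayes_bridge K \<alpha> (unif K) l s t \<nu> k"
proof
  fix x
  define D where "D = real K * \<alpha> t * \<nu> k + 1 - \<alpha> t"
  have "0 \<le> real K * \<alpha> t * \<nu> k" using simplex_nonneg[OF assms(5), of k] assms(3) by simp
  then have D: "D \<noteq> 0" using assms(4) unfolding D_def by linarith
  have q0t: "q0 \<alpha> (unif K) l t k \<nu> = D / real K"
    using assms(1,6) unfolding q0_def unif_def D_def by (simp add: field_simps)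
  show "canon K \<alpha> l s t \<nu> k x = bayes_bridge K \<alpha> (unif K) l s t \<nu> k x"
  proof (cases "x < K")
    case True
    then have "real K * (qfwd \<alpha> (unif K) l s t k x * q0 \<alpha> (unif K) l s x \<nu>) = canon K \<alpha> l s t \<nu> k x * D"
      using D assms(1,2,6) unfolding canon_def qfwd_def q0_def unif_def D_def[symmetric]
      by (cases "x = k") (simp_all add: field_simps)
    then show ?thesis
      using True D unfolding bayes_bridge_def q0t by (simp add: field_simps)
  next
    case False
    then show ?thesis unfolding canon_def bayes_bridge_def by simp
  qed
qed

context
  fixes K L :: nat and \<alpha> :: "real \<Rightarrow> real"
  assumes K: "0 < K" and sch: "schedule \<alpha>" and interior: "\<forall>t. 0 < t \<longrightarrow> t \<le> 1 \<longrightarrow> 0 < \<alpha> t \<and> \<alpha> t < 1"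
begin

lemma canon_eq_bayes_bridge_on_interval:
  assumes "0 \<le> s" "s < t" "t \<le> 1" and "simplex K \<nu>" and "k < K"
  shows "canon K \<alpha> l s t \<nu> k = bayes_bridge K \<alpha> (unif K) l s t \<nu> k"
proof (rule canon_eq_bayes_bridge[OF K _ _ _ assms(4,5)])
  show "0 < \<alpha> s" using sch interior assms(1-3) unfolding schedule_def
    by (cases "s = 0") auto
  show "0 \<le> \<alpha> t" "\<alpha> t < 1" using interior assms(1-3) by (auto intro: less_imp_le)
qed

lemma q0_unif_pos:
  assumes "0 < t" "t \<le> 1" and "simplex K \<nu>" and "k < K"
  shows "0 < q0 \<alpha> (unif K) l t k \<nu>"
  using interior assms simplex_nonneg[OF assms(3), of k] K unfolding q0_def unif_def
  by (intro add_nonneg_pos) auto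

lemma A1_canon: "A1 K L \<alpha> (unif K) (canon K \<alpha>)"
  unfolding A1_def using canon_eq_bayes_bridge_on_interval by (simp add: bayes_bridge_def)

lemma bridge_ext_canon: "bridge_ext K L (canon K \<alpha>)"
proof (unfold bridge_ext_def, intro allI impI)
  fix l k :: nat and s t :: real and \<nu> :: "nat \<Rightarrow> real"
  assume "l < L" and st: "0 \<le> s" "s < t" "t \<le> 1" and \<nu>: "simplex K \<nu>" and k: "k < K"
  have "0 < t" using st by linarith
  then show "simplex K (canon K \<alpha> l s t \<nu> k)"
    using simplex_bayes_bridge[where \<pi>="unif K", OF sch st(1) less_imp_le[OF st(2)] st(3) simplex_unif[OF K] \<nu> k]
      q0_unif_pos[OF _ st(3) \<nu> k] canon_eq_bayes_bridge_on_interval[OF st \<nu> k]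
    by simp
qed

lemma canon_inj:
  assumes "\<forall>s t. 0 \<le> s \<longrightarrow> s < t \<longrightarrow> t \<le> 1 \<longrightarrow> \<alpha> t < \<alpha> s"
    and "0 \<le> s" "s < t" "t \<le> 1" and "k < K" and "simplex K \<nu>" "simplex K \<nu>'"
    and "canon K \<alpha> l s t \<nu> k = canon K \<alpha> l s t \<nu>' k"
  shows "\<nu> = \<nu>'"
proof (rule bayes_bridge_inj[where \<pi>="unif K", OF sch assms(2-4) _ simplex_unif[OF K] _ assms(5-7)])
  show "\<alpha> t < \<alpha> s" using assms(1-4) by blast
  show "0 < unif K l k" using assms(5) K by (simp add: unif_def)
  show "bayes_bridge K \<alpha> (unif K) l s t \<nu> k = bayes_bridge K \<alpha> (unif K) l s t \<nu>' k"
    using assms(8) canon_eq_bayes_bridge_on_interval[OF assms(2-4)] assms(5-7) by simp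
qed

end

context
  fixes K L :: nat and p0 :: "(nat \<Rightarrow> nat) \<Rightarrow> real" and \<alpha> :: "real \<Rightarrow> real"
  assumes K: "0 < K" and dist: "is_dist K L p0" and sch: "schedule \<alpha>"
    and interior: "\<forall>t. 0 < t \<longrightarrow> t \<le> 1 \<longrightarrow> 0 < \<alpha> t \<and> \<alpha> t < 1"
    and strict: "\<forall>s t. 0 \<le> s \<longrightarrow> s < t \<longrightarrow> t \<le> 1 \<longrightarrow> \<alpha> t < \<alpha> s"
begin

lemma prev_eq_canon_loo_mean:
  assumes "l < L" and "0 \<le> s" "s < t" "t \<le> 1" and "xt \<in> seqs K L" and "0 < pt K L p0 \<alpha> (unif K) t xt"
  shows "prev K L p0 \<alpha> (unif K) l s t xt = canon K \<alpha> l s t (loo_mean K L p0 \<alpha> (unif K) xt t l) (xt l)"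
  using simplex_unif[OF K] bridge_ext_canon[OF K sch interior] A1_canon[OF K sch interior]
  by (intro prev_eq_bridge_loo_mean[OF dist sch _ _ _ assms]) auto

lemma canon_eq_prev_imp_loo_mean:
  assumes "l < L" and "0 \<le> s" "s < t" "t \<le> 1" and "xt \<in> seqs K L" and "0 < pt K L p0 \<alpha> (unif K) t xt"
    and "simplex K \<nu>" and "canon K \<alpha> l s t \<nu> (xt l) = prev K L p0 \<alpha> (unif K) l s t xt"
  shows "\<nu> = loo_mean K L p0 \<alpha> (unif K) xt t l"
proof (rule canon_inj[OF K sch interior strict assms(2-4) seqs_less[OF assms(5,1)] assms(7)])
  have "0 < t" using assms(2,3) by linarith
  then show "simplex K (loo_mean K L p0 \<alpha> (unif K) xt t l)"
    using simplex_unif[OF K] by (intro simplex_loo_mean_at[OF dist sch _ assms(1) _ assms(4-6)]) auto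
  show "canon K \<alpha> l s t \<nu> (xt l) = canon K \<alpha> l s t (loo_mean K L p0 \<alpha> (unif K) xt t l) (xt l)"
    using assms(8) prev_eq_canon_loo_mean[OF assms(1-6)] by simp
qed

lemma Jobj_minimizer_eq_loo_mean:
  assumes "grid n tg" and "predictor K L d"
    and "Jobj K L p0 \<alpha> (unif K) (canon K \<alpha>) n tg d
         \<le> Jobj K L p0 \<alpha> (unif K) (canon K \<alpha>) n tg (loo_mean K L p0 \<alpha> (unif K))"
    and "i \<in> {1..n}" "l < L" "x \<in> seqs K L" "0 < pt K L p0 \<alpha> (unif K) (tg i) x"
  shows "d x (tg i) l = loo_mean K L p0 \<alpha> (unif K) x (tg i) l"
proof -
  have "canon K \<alpha> l (tg (i - 1)) (tg i) (d x (tg i) l) (x l) = prev K L p0 \<alpha> (unif K) l (tg (i - 1)) (tg i) x"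
    using simplex_unif[OF K] bridge_ext_canon[OF K sch interior] A1_canon[OF K sch interior]
      bridge_eq_if_Jobj_le_loo_mean[OF dist sch _ _ _ assms] prev_eq_canon_loo_mean[OF assms(5) grid_step[OF assms(1,4)] assms(6,7)]
    by auto
  moreover have "simplex K (d x (tg i) l)"
    using assms(2,5,6) grid_step[OF assms(1,4)] unfolding predictor_def by auto
  ultimately show ?thesis
    using canon_eq_prev_imp_loo_mean[OF assms(5) grid_step[OF assms(1,4)] assms(6,7)] by blast
qed

end

theorem proposition1:
  fixes K L :: nat and p0 :: "(nat \<Rightarrow> nat) \<Rightarrow> real" and \<alpha> :: "real \<Rightarrow> real"
  assumes "2 \<le> K" and "1 \<le> L" and "is_dist K L p0" and "schedule \<alpha>"
  shows
   "(\<forall>\<pi> br. (\<forall>l<L. simplex K (\<pi> l)) \<longrightarrow> bridge_ext K L br \<longrightarrow> A1 K L \<alpha> \<pi> br \<longrightarrow>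
       \<comment> \<open>(i)\<close>
       (\<forall>s t l xt. 0 \<le> s \<longrightarrow> s < t \<longrightarrow> t \<le> 1 \<longrightarrow> l < L \<longrightarrow> xt \<in> seqs K L \<longrightarrow>
          0 < pt K L p0 \<alpha> \<pi> t xt \<longrightarrow>
          prev K L p0 \<alpha> \<pi> l s t xt = br l s t (loo_mean K L p0 \<alpha> \<pi> xt t l) (xt l))
     \<and> \<comment> \<open>(ii)\<close>
       (\<forall>n tg d. grid n tg \<longrightarrow> predictor K L d \<longrightarrow>
          Jobj K L p0 \<alpha> \<pi> br n tg (loo_mean K L p0 \<alpha> \<pi>) \<le> Jobj K L p0 \<alpha> \<pi> br n tg d))
   \<and> \<comment> \<open>(iii) UDM\<close>
   ((\<forall>s t. 0 \<le> s \<longrightarrow> s < t \<longrightarrow> t \<le> 1 \<longrightarrow> \<alpha> t < \<alpha> s) \<longrightarrow> \<alpha> 0 = 1 \<longrightarrow>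
    (\<forall>t. 0 < t \<longrightarrow> t \<le> 1 \<longrightarrow> 0 < \<alpha> t \<and> \<alpha> t < 1) \<longrightarrow>
      (\<forall>l s t k \<nu> \<nu>'. l < L \<longrightarrow> 0 < s \<longrightarrow> s < t \<longrightarrow> t \<le> 1 \<longrightarrow> k < K \<longrightarrow>
          simplex K \<nu> \<longrightarrow> simplex K \<nu>' \<longrightarrow> canon K \<alpha> l s t \<nu> k = canon K \<alpha> l s t \<nu>' k \<longrightarrow> \<nu> = \<nu>')
    \<and> (\<forall>l s t xt \<nu>. l < L \<longrightarrow> 0 < s \<longrightarrow> s < t \<longrightarrow> t \<le> 1 \<longrightarrow> xt \<in> seqs K L \<longrightarrow>
          0 < pt K L p0 \<alpha> (unif K) t xt \<longrightarrow> simplex K \<nu> \<longrightarrow>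
          canon K \<alpha> l s t \<nu> (xt l) = prev K L p0 \<alpha> (unif K) l s t xt \<longrightarrow>
          \<nu> = loo_mean K L p0 \<alpha> (unif K) xt t l)
    \<and> (\<forall>n tg d. grid n tg \<longrightarrow> predictor K L d \<longrightarrow>
          Jobj K L p0 \<alpha> (unif K) (canon K \<alpha>) n tg d \<le> Jobj K L p0 \<alpha> (unif K) (canon K \<alpha>) n tg (loo_mean K L p0 \<alpha> (unif K)) \<longrightarrow>
          (\<forall>i\<in>{1..n}. 0 < tg (i - 1) \<longrightarrow> (\<forall>l<L. \<forall>x\<in>seqs K L.
             0 < pt K L p0 \<alpha> (unif K) (tg i) x \<longrightarrow> d x (tg i) l = loo_mean K L p0 \<alpha> (unif K) x (tg i) l))))"
proof -
  have K: "0 < K" using assms(1) by simp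
  show ?thesis
  proof (intro conjI allI impI ballI, goal_cases)
    case 1
    then show ?case by (blast intro: prev_eq_bridge_loo_mean[OF assms(3,4)])
  next
    case 2
    then show ?case by (blast intro: Jobj_loo_mean_le[OF assms(3,4)])
  next
    \<comment> \<open>the uniqueness results hold for \<open>s = 0\<close> as well\<close>
    case 3
    then show ?case by (blast intro: canon_inj[OF K assms(4)] less_imp_le)
  next
    case 4
    then show ?case by (blast intro: canon_eq_prev_imp_loo_mean[OF K assms(3,4)] less_imp_le)
  next
    case 5
    then show ?case by (blast intro: Jobj_minimizer_eq_loo_mean[OF K assms(3,4)])
  qed
qed

end
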